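(* Every set $S\subset\mathbb{Z}_{>1}$ has a unique L-primitive subset $\langle S\rangle\subset S$ with $\mathrm{L}_{\langle S\rangle}=\mathrm{L}_S$. In particular $\langle S\rangle=S$ if $S$ is L-primitive.
   Context: For an integer $a>1$ with largest prime factor $P(a)$, $\mathrm{L}_a=\{ba: b\in\mathbb{N},\ \text{every prime } p\mid b \text{ satisfies } p\ge P(a)\}$, and for a set $T$, $\mathrm{L}_T=\bigcup_{a\in T}\mathrm{L}_a$. A set $A\subset\mathbb{Z}_{>1}$ is L-primitive if $a'\notin\mathrm{L}_a$ for all distinct $a,a'\in A$. *)

theory Defs
  imports "HOL-Computational_Algebra.Primes"
begin

definition gpf :: "nat \<Rightarrow> nat" where
  "gpf a = Max (prime_factors a)"

definition Lset :: "nat \<Rightarrow> nat set" where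
  "Lset a = {b * a | b. b \<ge> 1 \<and> (\<forall>p. prime p \<and> p dvd b \<longrightarrow> p \<ge> gpf a)}"

definition LsetT :: "nat set \<Rightarrow> nat set" where
  "LsetT T = (\<Union>a\<in>T. Lset a)"

definition L_primitive :: "nat set \<Rightarrow> bool" where
  "L_primitive A \<longleftrightarrow> A \<subseteq> {2..} \<and> (\<forall>a\<in>A. \<forall>a'\<in>A. a \<noteq> a' \<longrightarrow> a' \<notin> Lset a)"

end

theory Submission
  imports Defs
begin

text \<open>
  On integers \<open>> 1\<close> the relation \<open>x \<in> L\<^sub>a\<close> is a partial order: it is transitive
  because \<open>P(a) \<le> P(ba)\<close>, antisymmetric because \<open>a\<close> divides every element of \<open>L\<^sub>a\<close>,
  and well-founded because \<open>a \<le> ba\<close>. Hence every element of \<open>S\<close> lies above a minimal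
  element of \<open>S\<close>, so the minimal elements form an L-primitive subset generating \<open>L\<^sub>S\<close>.
  Conversely an L-primitive generating subset must contain each minimal element (nothing
  else in \<open>S\<close> lies below it) and cannot contain a non-minimal one (it would lie above
  some other element of that subset).
\<close>

lemma gpf_le_gpf_if_dvd:
  assumes "(a::nat) \<ge> 2" "a dvd x" "x \<noteq> 0"
  shows "gpf a \<le> gpf x"
proof -
  have "prime_factors a \<subseteq> prime_factors x"
    using assms by (simp add: dvd_prime_factors)
  moreover have "prime_factors a \<noteq> {}"
    using assms(1) by (simp add: prime_factorization_empty_iff)
  ultimately show ?thesis
    unfolding gpf_def by (rule Max_mono) simp
qed

lemma Lset_self: "a \<in> Lset a"
  unfolding Lset_def by force

lemma dvd_if_mem_Lset: "x \<in> Lset a \<Longrightarrow> a dvd x"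
  unfolding Lset_def by auto

lemma le_if_mem_Lset: "x \<in> Lset a \<Longrightarrow> a \<ge> 1 \<Longrightarrow> a \<le> x"
  unfolding Lset_def by auto

lemma Lset_trans:
  assumes "a \<ge> 2" "y \<in> Lset a" "x \<in> Lset y"
  shows "x \<in> Lset a"
proof -
  obtain b where b: "b \<ge> 1" "\<forall>p. prime p \<and> p dvd b \<longrightarrow> p \<ge> gpf a" "y = b * a"
    using assms(2) unfolding Lset_def by auto
  obtain c where c: "c \<ge> 1" "\<forall>p. prime p \<and> p dvd c \<longrightarrow> p \<ge> gpf y" "x = c * y"
    using assms(3) unfolding Lset_def by auto
  have "gpf a \<le> gpf y"
    using gpf_le_gpf_if_dvd[OF assms(1)] b assms(1) by simp
  then have "\<forall>p. prime p \<and> p dvd c * b \<longrightarrow> p \<ge> gpf a"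
    using b c by (meson le_trans prime_dvd_mult_iff)
  moreover have "c * b \<ge> 1" "x = (c * b) * a"
    using b c by simp_all
  ultimately show ?thesis
    unfolding Lset_def by blast
qed

lemma Lset_antisym: "x \<in> Lset a \<Longrightarrow> a \<in> Lset x \<Longrightarrow> a = x"
  by (meson dvd_antisym dvd_if_mem_Lset)

lemma mem_LsetT_iff: "x \<in> LsetT T \<longleftrightarrow> (\<exists>t\<in>T. x \<in> Lset t)"
  unfolding LsetT_def by blast

definition L_minimal :: "nat set \<Rightarrow> nat set" where
  "L_minimal S = {a \<in> S. \<forall>a'\<in>S. a \<in> Lset a' \<longrightarrow> a' = a}"

lemma L_minimal_subset: "L_minimal S \<subseteq> S"
  unfolding L_minimal_def by blast

lemma L_minimal_below:
  assumes "S \<subseteq> {2..}" "s \<in> S"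
  shows "\<exists>t\<in>L_minimal S. s \<in> Lset t"
  using assms(2)
proof (induction s rule: less_induct)
  case (less s)
  show ?case
  proof (cases "s \<in> L_minimal S")
    case True
    then show ?thesis
      using Lset_self by blast
  next
    case False
    then obtain s' where s': "s' \<in> S" "s \<in> Lset s'" "s' \<noteq> s"
      using less.prems unfolding L_minimal_def by blast
    have "s' < s"
      using le_if_mem_Lset[OF s'(2)] s' assms(1) by fastforce
    then obtain t where t: "t \<in> L_minimal S" "s' \<in> Lset t"
      using less.IH s'(1) by blast
    moreover have "t \<ge> 2"
      using t L_minimal_subset assms(1) by blast
    ultimately show ?thesis
      using Lset_trans s'(2) by blast
  qed
qed

lemma L_primitive_L_minimal: "S \<subseteq> {2..} \<Longrightarrow> L_primitive (L_minimal S)"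
  unfolding L_primitive_def L_minimal_def by blast

lemma LsetT_L_minimal:
  assumes "S \<subseteq> {2..}"
  shows "LsetT (L_minimal S) = LsetT S"
proof
  show "LsetT (L_minimal S) \<subseteq> LsetT S"
    using L_minimal_subset unfolding LsetT_def by blast
next
  show "LsetT S \<subseteq> LsetT (L_minimal S)"
  proof
    fix x
    assume "x \<in> LsetT S"
    then obtain s where s: "s \<in> S" "x \<in> Lset s"
      by (auto simp: mem_LsetT_iff)
    then obtain t where t: "t \<in> L_minimal S" "s \<in> Lset t"
      using L_minimal_below assms by blast
    have "t \<ge> 2"
      using t L_minimal_subset assms by blast
    then show "x \<in> LsetT (L_minimal S)"
      using Lset_trans t s by (auto simp: mem_LsetT_iff)
  qed
qed

lemma L_minimal_unique:
  assumes "S \<subseteq> {2..}" "T \<subseteq> S" "L_primitive T" "LsetT T = LsetT S"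
  shows "T = L_minimal S"
proof
  show "L_minimal S \<subseteq> T"
  proof
    fix a
    assume a: "a \<in> L_minimal S"
    then have "a \<in> LsetT S"
      using L_minimal_subset Lset_self by (auto simp: mem_LsetT_iff)
    then have "a \<in> LsetT T"
      using assms(4) by simp
    then obtain t where "t \<in> T" "a \<in> Lset t"
      by (auto simp: mem_LsetT_iff)
    then show "a \<in> T"
      using a assms(2) unfolding L_minimal_def by blast
  qed
next
  show "T \<subseteq> L_minimal S"
  proof
    fix a
    assume a: "a \<in> T"
    have "a' = a" if a': "a' \<in> S" "a \<in> Lset a'" for a'
    proof -
      have "a' \<in> LsetT T"
        using a'(1) assms(4) Lset_self by (auto simp: mem_LsetT_iff)
      then obtain t where t: "t \<in> T" "a' \<in> Lset t"
        by (auto simp: mem_LsetT_iff)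
      have "a \<in> Lset t"
        using Lset_trans t a' assms(1,2) by blast
      then have "t = a"
        using assms(3) t a unfolding L_primitive_def by blast
      then show "a' = a"
        using Lset_antisym t a' by blast
    qed
    then show "a \<in> L_minimal S"
      using a assms(2) unfolding L_minimal_def by blast
  qed
qed

theorem lemma5p4:
  fixes S :: "nat set"
  assumes "S \<subseteq> {2..}"
  shows "(\<exists>!T. T \<subseteq> S \<and> L_primitive T \<and> LsetT T = LsetT S)
         \<and> (L_primitive S \<longrightarrow> (THE T. T \<subseteq> S \<and> L_primitive T \<and> LsetT T = LsetT S) = S)"
proof -
  have generator_iff: "T \<subseteq> S \<and> L_primitive T \<and> LsetT T = LsetT S \<longleftrightarrow> T = L_minimal S" for T
    using L_minimal_unique L_minimal_subset L_primitive_L_minimal LsetT_L_minimal assms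
    by metis
  have "L_primitive S \<longrightarrow> L_minimal S = S"
    using generator_iff by blast
  then show ?thesis
    unfolding generator_iff by simp
qed

end
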